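(* Let $\kappa$ be a regular infinite cardinal, let $\eta > \kappa^{++}$ be an ordinal, and let $f = \langle \kappa_\xi : \xi < \eta\rangle$ be the cardinal sequence of some LCS space. Let $\alpha < \eta$ be an ordinal with $\mathrm{cf}(\alpha) > \kappa^+$ such that there is a strictly increasing sequence of ordinals $\langle \alpha_\xi : \xi < \mathrm{cf}(\alpha)\rangle$ converging to $\alpha$ with $\kappa_{\alpha_\xi} \le \kappa$ for every $\xi < \mathrm{cf}(\alpha)$. Then $\kappa_\alpha \le \kappa$.
   Context: An LCS space is a locally compact, Hausdorff, scattered topological space. For an LCS space $X$ and an ordinal $\alpha$, the $\alpha$-th Cantor–Bendixson level $I_\alpha(X)$ is the set of isolated points of $X \setminus \bigcup\{I_\beta(X) : \beta < \alpha\}$. The reduced height $\mathrm{ht}^-(X)$ is the least ordinal $\delta$ such that $I_\delta(X)$ is finite. The cardinal sequence of $X$ is $\mathrm{CS}(X) = \langle |I_\alpha(X)| : \alpha < \mathrm{ht}^-(X)\rangle$. A sequence $f$ of cardinals is "the cardinal sequence of some LCS space" if $f = \mathrm{CS}(X)$ for some LCS space $X$. *)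

theory Defs
  imports "HOL-Analysis.Analysis"
begin

definition isolated_points_of :: "'a topology \<Rightarrow> 'a set \<Rightarrow> 'a set" where
  "isolated_points_of X S = {x \<in> S. \<exists>U. openin X U \<and> U \<inter> S = {x}}"

definition scattered_space :: "'a topology \<Rightarrow> bool" where
  "scattered_space X \<longleftrightarrow>
     (\<forall>S. S \<subseteq> topspace X \<and> S \<noteq> {} \<longrightarrow> isolated_points_of X S \<noteq> {})"

definition LCS_space :: "'a topology \<Rightarrow> bool" where
  "LCS_space X \<longleftrightarrow> locally_compact_space X \<and> Hausdorff_space X \<and> scattered_space X"

text \<open>Ordinals are represented as elements of an arbitrary well-ordered type 'o.
  The ordinal represented by eta is the order type of the initial segment below eta.\<close>

definition ord_seg :: "'o::wellorder \<Rightarrow> 'o rel" where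
  "ord_seg \<eta> = {(x, y). x \<le> y \<and> x < \<eta> \<and> y < \<eta>}"

definition cofinal_seq :: "('o::wellorder \<Rightarrow> 'o) \<Rightarrow> 'o \<Rightarrow> 'o \<Rightarrow> bool" where
  "cofinal_seq g \<delta> \<alpha> \<longleftrightarrow>
     (\<forall>\<xi>. \<xi> < \<delta> \<longrightarrow> g \<xi> < \<alpha>) \<and>
     (\<forall>\<xi> \<zeta>. \<xi> < \<zeta> \<and> \<zeta> < \<delta> \<longrightarrow> g \<xi> < g \<zeta>) \<and>
     (\<forall>\<beta>. \<beta> < \<alpha> \<longrightarrow> (\<exists>\<xi>. \<xi> < \<delta> \<and> \<beta> \<le> g \<xi>))"

definition cof :: "'o::wellorder \<Rightarrow> 'o" where
  "cof \<alpha> = (LEAST \<delta>. \<exists>g. cofinal_seq g \<delta> \<alpha>)"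

definition CB_level :: "'a topology \<Rightarrow> 'o::wellorder \<Rightarrow> 'a set" where
  "CB_level X = wfrec {(x, y). x < y}
     (\<lambda>F \<alpha>. isolated_points_of X (topspace X - \<Union> (F ` {\<beta>. \<beta> < \<alpha>})))"

lemma CB_level_eq:
  "CB_level X \<alpha> = isolated_points_of X (topspace X - \<Union> (CB_level X ` {\<beta>. \<beta> < \<alpha>}))"
proof -
  have wf: "wf {(x, y::'b::wellorder). x < y}"
    by (rule wellorder_class.wf)
  show ?thesis
    unfolding CB_level_def
    by (subst wfrec[OF wf]) (simp add: cut_def image_def)
qed

definition reduced_height_is :: "'a topology \<Rightarrow> 'o::wellorder \<Rightarrow> bool" where
  "reduced_height_is X \<eta> \<longleftrightarrow>
     finite (CB_level X \<eta>) \<and> (\<forall>\<xi>. \<xi> < \<eta> \<longrightarrow> infinite (CB_level X \<xi>))"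

end

theory Submission
  imports Defs
begin

unbundle cardinal_syntax

text \<open>Suppose level \<open>\<alpha>\<close> had \<open>\<kappa>\<^sup>+\<close> points \<open>e \<zeta>\<close>. Around each choose a compact neighbourhood
  \<open>K \<zeta>\<close> meeting the derived set \<open>X\<^sup>(\<^sup>\<alpha>\<^sup>)\<close> only in \<open>e \<zeta>\<close>. For \<open>\<zeta> \<noteq> \<zeta>'\<close> the compact set
  \<open>K \<zeta> \<inter> K \<zeta>'\<close> misses \<open>X\<^sup>(\<^sup>\<alpha>\<^sup>)\<close>, so it is covered by one of the open sets
  \<open>\<Union>\<^sub>\<delta>\<^sub>\<le>\<^sub>\<gamma> I\<^sub>\<delta>\<close>, \<open>\<gamma> < \<alpha>\<close>, and misses every level \<open>g \<xi>\<close> for large \<open>\<xi>\<close>. Since \<open>cof \<alpha>\<close> is regular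
  and exceeds \<open>\<kappa>\<^sup>+\<close>, one index \<open>s\<close> works for all pairs. Each neighbourhood of \<open>e \<zeta>\<close> meets
  level \<open>g s\<close>, so picking such points inside the \<open>K \<zeta>\<close> gives \<open>\<kappa>\<^sup>+\<close> distinct points of
  that level, contradicting \<open>|I\<^bsub>g s\<^esub>| \<le> \<kappa>\<close>.\<close>

section \<open>Ordinals as initial segments\<close>

lemma Field_ord_seg: "Field (ord_seg c) = {x. x < c}"
  unfolding ord_seg_def Field_def by auto

lemma Well_order_ord_seg: "Well_order (ord_seg c)"
proof -
  have "well_order_on {x. x < c} (ord_seg c)"
    unfolding well_order_on_def linear_order_on_def partial_order_on_def preorder_on_def
      refl_on_def trans_on_def antisym_on_def total_on_def ord_seg_def
  proof (intro conjI)
    show "wf ({(x, y). x \<le> y \<and> x < c \<and> y < c} - Id)"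
      by (rule wf_subset[OF wf]) auto
  qed auto
  then show ?thesis by (simp add: Field_ord_seg)
qed

lemma Restr_ord_seg_underS: "a < c \<Longrightarrow> Restr (ord_seg c) (underS (ord_seg c) a) = ord_seg a"
  unfolding ord_seg_def underS_def by auto

lemma ordLess_ord_seg_obtain:
  assumes "Well_order r" and "r <o ord_seg c"
  obtains d where "d < c" and "(r, ord_seg d) \<in> ordIso"
proof -
  obtain d where "d \<in> Field (ord_seg c)" "(r, Restr (ord_seg c) (underS (ord_seg c) d)) \<in> ordIso"
    using assms ordLess_iff_ordIso_Restr[OF Well_order_ord_seg] by blast
  then show thesis
    using that Restr_ord_seg_underS[of d c] by (simp add: Field_ord_seg)
qed

lemma card_of_ord_seg_ordIso:
  assumes "Card_order r" and "(r, ord_seg d) \<in> ordIso"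
  shows "(card_of {x. x < d}, r) \<in> ordIso"
proof -
  have "(card_of (Field (ord_seg d)), card_of (Field r)) \<in> ordIso"
    by (rule card_of_cong[OF ordIso_symmetric[OF assms(2)]])
  then have "(card_of {x. x < d}, card_of (Field r)) \<in> ordIso"
    by (simp only: Field_ord_seg)
  then show ?thesis
    using card_of_Field_ordIso[OF assms(1)] by (rule ordIso_transitive)
qed

lemma infinite_ord_seg:
  assumes "Cinfinite r" and "r \<le>o ord_seg c"
  shows "infinite {x. x < c}"
  using card_of_ordLeq_infinite[OF card_of_mono2[OF assms(2)]] assms(1)
  by (simp add: Field_ord_seg cinfinite_def)

section \<open>Cofinality\<close>

lemma cofinal_seq_mono:
  assumes "cofinal_seq g c \<alpha>" and "\<xi> \<le> \<xi>'" and "\<xi>' < c"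
  shows "g \<xi> \<le> g \<xi>'"
  using assms unfolding cofinal_seq_def by (metis order_le_less)

lemma cof_le: "cofinal_seq g \<delta> \<alpha> \<Longrightarrow> cof \<alpha> \<le> \<delta>"
  unfolding cof_def by (rule Least_le[where P="\<lambda>\<delta>. \<exists>g. cofinal_seq g \<delta> \<alpha>", OF exI])

lemma cof_le_reindex:
  assumes g: "cofinal_seq g (cof \<alpha>) \<alpha>"
    and k_less: "\<forall>\<zeta><L. k \<zeta> < cof \<alpha>"
    and k_strict: "\<forall>\<zeta> \<zeta>'. \<zeta> < \<zeta>' \<and> \<zeta>' < L \<longrightarrow> k \<zeta> < k \<zeta>'"
    and k_cofinal: "\<forall>\<xi><cof \<alpha>. \<exists>\<zeta><L. \<xi> \<le> k \<zeta>"
  shows "cof \<alpha> \<le> L"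
proof (rule cof_le)
  have g_less: "\<xi> < cof \<alpha> \<Longrightarrow> g \<xi> < \<alpha>"
    and g_strict: "\<xi> < \<xi>' \<Longrightarrow> \<xi>' < cof \<alpha> \<Longrightarrow> g \<xi> < g \<xi>'" for \<xi> \<xi>'
    using g unfolding cofinal_seq_def by blast+
  show "cofinal_seq (g \<circ> k) L \<alpha>"
    unfolding cofinal_seq_def
  proof (intro conjI allI impI)
    fix \<beta> assume "\<beta> < \<alpha>"
    then obtain \<xi> where "\<xi> < cof \<alpha>" "\<beta> \<le> g \<xi>"
      using g unfolding cofinal_seq_def by blast
    moreover obtain \<zeta> where "\<zeta> < L" "\<xi> \<le> k \<zeta>"
      using k_cofinal \<open>\<xi> < cof \<alpha>\<close> by blast
    moreover have "g \<xi> \<le> g (k \<zeta>)"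
      using cofinal_seq_mono[OF g \<open>\<xi> \<le> k \<zeta>\<close>] k_less \<open>\<zeta> < L\<close> by blast
    ultimately show "\<exists>\<zeta><L. \<beta> \<le> (g \<circ> k) \<zeta>"
      using order.trans[of \<beta> "g \<xi>" "g (k \<zeta>)"] by auto
  next
    fix \<zeta> assume "\<zeta> < L"
    then show "(g \<circ> k) \<zeta> < \<alpha>" using g_less k_less by simp
  next
    fix \<zeta> \<zeta>' assume "\<zeta> < \<zeta>' \<and> \<zeta>' < L"
    then show "(g \<circ> k) \<zeta> < (g \<circ> k) \<zeta>'"
      using g_strict k_less k_strict by (metis comp_apply order.strict_trans)
  qed
qed

text \<open>Once no admissible value below \<open>c\<close> remains, the \<open>LEAST\<close> returns junk;
  \<open>greedy_majorantI\<close> gives the intended property as long as one does.\<close>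

definition greedy_majorant :: "('o::wellorder \<Rightarrow> 'o) \<Rightarrow> 'o \<Rightarrow> 'o \<Rightarrow> 'o" where
  "greedy_majorant h c = wfrec {(x, y). x < y}
     (\<lambda>F \<zeta>. LEAST \<xi>. \<xi> < c \<and> h \<zeta> \<le> \<xi> \<and> (\<forall>\<zeta>'<\<zeta>. F \<zeta>' < \<xi>))"

lemma greedy_majorant_eq:
  "greedy_majorant h c \<zeta> =
     (LEAST \<xi>. \<xi> < c \<and> h \<zeta> \<le> \<xi> \<and> (\<forall>\<zeta>'<\<zeta>. greedy_majorant h c \<zeta>' < \<xi>))"
  unfolding greedy_majorant_def by (subst wfrec[OF wellorder_class.wf]) (simp add: cut_def)

lemma greedy_majorantI:
  assumes "\<xi> < c" "h \<zeta> \<le> \<xi>" "\<forall>\<zeta>'<\<zeta>. greedy_majorant h c \<zeta>' < \<xi>"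
  shows "greedy_majorant h c \<zeta> < c \<and> h \<zeta> \<le> greedy_majorant h c \<zeta> \<and>
           (\<forall>\<zeta>'<\<zeta>. greedy_majorant h c \<zeta>' < greedy_majorant h c \<zeta>)"
proof -
  let ?Q = "\<lambda>\<xi>. \<xi> < c \<and> h \<zeta> \<le> \<xi> \<and> (\<forall>\<zeta>'<\<zeta>. greedy_majorant h c \<zeta>' < \<xi>)"
  have eq: "greedy_majorant h c \<zeta> = (LEAST \<xi>. ?Q \<xi>)"
    by (rule greedy_majorant_eq)
  show ?thesis
    unfolding eq by (rule LeastI[of ?Q \<xi>]) (use assms in blast)
qed

text \<open>Regularity of \<open>cof \<alpha>\<close>: otherwise the greedy majorant of \<open>h\<close>, cut off at its first
  failure, would yield a shorter cofinal sequence.\<close>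

lemma bounded_below_cof:
  assumes g: "cofinal_seq g (cof \<alpha>) \<alpha>" and \<delta>: "\<delta> < cof \<alpha>"
    and h: "\<forall>\<zeta><\<delta>. h \<zeta> < cof \<alpha>"
  shows "\<exists>\<xi><cof \<alpha>. \<forall>\<zeta><\<delta>. h \<zeta> \<le> \<xi>"
proof (rule ccontr)
  assume unbounded: "\<not> (\<exists>\<xi><cof \<alpha>. \<forall>\<zeta><\<delta>. h \<zeta> \<le> \<xi>)"
  define k where "k = greedy_majorant h (cof \<alpha>)"
  define P where "P \<zeta> \<longleftrightarrow> (\<exists>\<xi><cof \<alpha>. h \<zeta> \<le> \<xi> \<and> (\<forall>\<zeta>'<\<zeta>. k \<zeta>' < \<xi>))" for \<zeta>
  have kP: "k \<zeta> < cof \<alpha> \<and> h \<zeta> \<le> k \<zeta> \<and> (\<forall>\<zeta>'<\<zeta>. k \<zeta>' < k \<zeta>)" if "P \<zeta>" for \<zeta>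
    using that greedy_majorantI unfolding P_def k_def by blast
  define z where "z = (LEAST \<zeta>. \<zeta> = \<delta> \<or> \<zeta> < \<delta> \<and> \<not> P \<zeta>)"
  have z_le: "z \<le> \<delta>" and z_cases: "z = \<delta> \<or> z < \<delta> \<and> \<not> P z"
    using LeastI[of "\<lambda>\<zeta>. \<zeta> = \<delta> \<or> \<zeta> < \<delta> \<and> \<not> P \<zeta>" \<delta>] Least_le[of _ \<delta>] unfolding z_def by auto
  have P_below: "P \<zeta>" if "\<zeta> < z" for \<zeta>
    using not_less_Least[of \<zeta> "\<lambda>\<zeta>. \<zeta> = \<delta> \<or> \<zeta> < \<delta> \<and> \<not> P \<zeta>"] that z_le unfolding z_def by auto
  have "cof \<alpha> \<le> z"
  proof (rule cof_le_reindex[OF g])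
    show "\<forall>\<zeta><z. k \<zeta> < cof \<alpha>" and "\<forall>\<zeta> \<zeta>'. \<zeta> < \<zeta>' \<and> \<zeta>' < z \<longrightarrow> k \<zeta> < k \<zeta>'"
      using P_below kP by blast+
    show "\<forall>\<xi><cof \<alpha>. \<exists>\<zeta><z. \<xi> \<le> k \<zeta>"
    proof (intro allI impI)
      fix \<xi> assume \<xi>: "\<xi> < cof \<alpha>"
      from z_cases show "\<exists>\<zeta><z. \<xi> \<le> k \<zeta>"
      proof
        assume "z = \<delta>"
        obtain \<zeta> where "\<zeta> < \<delta>" "\<xi> < h \<zeta>" using unbounded \<xi> by (auto simp: not_le)
        moreover have "h \<zeta> \<le> k \<zeta>" using \<open>z = \<delta>\<close> \<open>\<zeta> < \<delta>\<close> P_below kP by blast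
        ultimately have "\<xi> \<le> k \<zeta>" using less_le_trans[of \<xi> "h \<zeta>" "k \<zeta>"] by simp
        then show ?thesis using \<open>z = \<delta>\<close> \<open>\<zeta> < \<delta>\<close> by blast
      next
        assume "z < \<delta> \<and> \<not> P z"
        moreover have "max \<xi> (h z) < cof \<alpha>" using \<xi> h \<open>z < \<delta> \<and> \<not> P z\<close> by simp
        ultimately have "\<not> (\<forall>\<zeta>'<z. k \<zeta>' < max \<xi> (h z))"
          unfolding P_def by auto
        then show ?thesis by (auto simp: not_less)
      qed
    qed
  qed
  then show False using z_le \<delta> by simp
qed

lemma eventually_below_cof_Ball:
  assumes g: "cofinal_seq g (cof \<alpha>) \<alpha>" and \<delta>: "\<delta> < cof \<alpha>"
    and ev: "\<forall>\<zeta><\<delta>. \<exists>\<xi><cof \<alpha>. \<forall>\<xi>'. \<xi> \<le> \<xi>' \<and> \<xi>' < cof \<alpha> \<longrightarrow> P \<zeta> \<xi>'"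
  shows "\<exists>\<xi><cof \<alpha>. \<forall>\<xi>'. \<xi> \<le> \<xi>' \<and> \<xi>' < cof \<alpha> \<longrightarrow> (\<forall>\<zeta><\<delta>. P \<zeta> \<xi>')"
proof -
  define h where "h \<zeta> = (SOME \<xi>. \<xi> < cof \<alpha> \<and> (\<forall>\<xi>'. \<xi> \<le> \<xi>' \<and> \<xi>' < cof \<alpha> \<longrightarrow> P \<zeta> \<xi>'))" for \<zeta>
  have h: "h \<zeta> < cof \<alpha> \<and> (\<forall>\<xi>'. h \<zeta> \<le> \<xi>' \<and> \<xi>' < cof \<alpha> \<longrightarrow> P \<zeta> \<xi>')" if "\<zeta> < \<delta>" for \<zeta>
  proof -
    have "\<exists>\<xi>. \<xi> < cof \<alpha> \<and> (\<forall>\<xi>'. \<xi> \<le> \<xi>' \<and> \<xi>' < cof \<alpha> \<longrightarrow> P \<zeta> \<xi>')"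
      using ev that by blast
    from someI_ex[OF this] show ?thesis unfolding h_def .
  qed
  then obtain \<xi> where \<xi>: "\<xi> < cof \<alpha>" "\<forall>\<zeta><\<delta>. h \<zeta> \<le> \<xi>"
    using bounded_below_cof[OF g \<delta>] by blast
  have "P \<zeta> \<xi>'" if "\<xi> \<le> \<xi>'" "\<xi>' < cof \<alpha>" "\<zeta> < \<delta>" for \<zeta> \<xi>'
    using h[OF that(3)] order.trans[OF _ that(1), of "h \<zeta>"] \<xi>(2) that by blast
  then show ?thesis using \<xi>(1) by blast
qed

lemma infinite_below_obtain_pair:
  fixes c :: "'a::linorder"
  assumes "infinite {x. x < c}"
  obtains a b where "a < b" and "b < c"
proof -
  obtain a where a: "a < c"
    using infinite_imp_nonempty[OF assms] by blast
  moreover obtain b where "b < c" "b \<noteq> a"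
    using infinite_imp_nonempty[OF Diff_infinite_finite[OF finite.insertI[OF finite.emptyI] assms, of a]]
    by blast
  ultimately consider "a < b" "b < c" | "b < a" "a < c"
    by (auto simp: neq_iff)
  then show thesis using that by cases
qed

lemma cofinal_seq_exceeds:
  fixes \<alpha> \<beta> :: "'o::wellorder"
  assumes g: "cofinal_seq g (cof \<alpha>) \<alpha>" and inf: "infinite {\<xi>. \<xi> < cof \<alpha>}" and "\<beta> < \<alpha>"
  shows "\<exists>\<xi><cof \<alpha>. \<beta> < g \<xi>"
proof (rule ccontr)
  assume "\<not> ?thesis"
  then have le_\<beta>: "\<forall>\<xi><cof \<alpha>. g \<xi> \<le> \<beta>" by (simp add: not_less) (blast dest: leD)
  obtain a b where "a < b" "b < cof \<alpha>"
    using infinite_below_obtain_pair[OF inf] by blast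
  define ord1 where "ord1 = (LEAST x :: 'o. \<exists>y. y < x)"
  have ord1_le: "ord1 \<le> b"
    unfolding ord1_def by (rule Least_le) (use \<open>a < b\<close> in blast)
  have ord1_pos: "\<exists>y. y < ord1"
    unfolding ord1_def by (rule LeastI[of _ b]) (use \<open>a < b\<close> in blast)
  have below_ord1: "\<not> (\<exists>y. y < z)" if "z < ord1" for z
    using not_less_Least[of z "\<lambda>x. \<exists>y. y < x"] that unfolding ord1_def by blast
  \<comment> \<open>\<open>ord1\<close> is the ordinal 1; as \<open>g\<close> never exceeds \<open>\<beta>\<close>, the one-term sequence \<open>\<beta>\<close> is cofinal\<close>
  have "cofinal_seq (\<lambda>_. \<beta>) ord1 \<alpha>"
    unfolding cofinal_seq_def
  proof (intro conjI allI impI)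
    fix \<gamma> assume "\<gamma> < \<alpha>"
    then obtain \<xi> where "\<xi> < cof \<alpha>" "\<gamma> \<le> g \<xi>" using g unfolding cofinal_seq_def by blast
    moreover have "g \<xi> \<le> \<beta>" using le_\<beta> \<open>\<xi> < cof \<alpha>\<close> by blast
    ultimately have "\<gamma> \<le> \<beta>" using order.trans[of \<gamma> "g \<xi>" \<beta>] by blast
    then show "\<exists>\<xi>. \<xi> < ord1 \<and> \<gamma> \<le> \<beta>" using ord1_pos by blast
  next
    fix \<xi> \<zeta> assume "\<xi> < \<zeta> \<and> \<zeta> < ord1"
    then show "\<beta> < \<beta>" using below_ord1 by blast
  qed (use \<open>\<beta> < \<alpha>\<close> in simp)
  then have "cof \<alpha> \<le> ord1" by (rule cof_le)
  then show False using ord1_le \<open>b < cof \<alpha>\<close> by simp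
qed

lemma card_of_ordLeq_disjoint_traces:
  assumes "\<And>i. i \<in> I \<Longrightarrow> A i \<inter> L \<noteq> {}"
    and "\<And>i j. i \<in> I \<Longrightarrow> j \<in> I \<Longrightarrow> i \<noteq> j \<Longrightarrow> A i \<inter> A j \<inter> L = {}"
  shows "|I| \<le>o |L|"
proof -
  define d where "d i = (SOME x. x \<in> A i \<inter> L)" for i
  have d: "d i \<in> A i \<inter> L" if "i \<in> I" for i
    unfolding d_def using some_in_eq assms(1)[OF that] by blast
  have "inj_on d I"
  proof (rule inj_onI, rule ccontr)
    fix i j assume "i \<in> I" "j \<in> I" "d i = d j" "i \<noteq> j"
    then have "d i \<in> A i \<inter> A j \<inter> L" using d[of i] d[of j] by auto
    then show False using assms(2)[OF \<open>i \<in> I\<close> \<open>j \<in> I\<close> \<open>i \<noteq> j\<close>] by blast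
  qed
  moreover have "d ` I \<subseteq> L" using d by blast
  ultimately show ?thesis
    using card_of_ordLeq by blast
qed

section \<open>Cantor--Bendixson levels\<close>

definition CB_derivative :: "'a topology \<Rightarrow> 'o::wellorder \<Rightarrow> 'a set" where
  "CB_derivative X \<alpha> = topspace X - \<Union> (CB_level X ` {\<beta>. \<beta> < \<alpha>})"

lemma CB_level_eq_isolated_points: "CB_level X \<alpha> = isolated_points_of X (CB_derivative X \<alpha>)"
  unfolding CB_derivative_def by (rule CB_level_eq)

lemma CB_level_subset_derivative: "CB_level X \<alpha> \<subseteq> CB_derivative X \<alpha>"
  unfolding CB_level_eq_isolated_points isolated_points_of_def by blast

lemma CB_derivative_antimono: "\<beta> \<le> \<alpha> \<Longrightarrow> CB_derivative X \<alpha> \<subseteq> CB_derivative X \<beta>"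
  unfolding CB_derivative_def by auto

lemma CB_level_disjoint:
  fixes \<gamma> \<beta> :: "'o::wellorder"
  assumes "\<gamma> \<noteq> \<beta>"
  shows "CB_level X \<gamma> \<inter> CB_level X \<beta> = {}"
proof -
  have "CB_level X \<gamma> \<inter> CB_level X \<beta> = {}" if "\<gamma> < \<beta>" for \<gamma> \<beta> :: 'o
    using CB_level_subset_derivative[of X \<beta>] that unfolding CB_derivative_def by blast
  then show ?thesis
    using assms by (metis inf_commute linorder_neqE)
qed

lemma CB_level_isolated:
  assumes "y \<in> CB_level X \<alpha>"
  obtains V where "openin X V" and "V \<inter> CB_derivative X \<alpha> = {y}"
  using assms unfolding CB_level_eq_isolated_points isolated_points_of_def by blast

lemma openin_Union_CB_levels: "openin X (\<Union> (CB_level X ` {\<delta>. \<delta> \<le> \<gamma>}))"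
proof (subst openin_subopen, intro ballI)
  fix x assume "x \<in> \<Union> (CB_level X ` {\<delta>. \<delta> \<le> \<gamma>})"
  then obtain \<delta> where \<delta>: "\<delta> \<le> \<gamma>" "x \<in> CB_level X \<delta>" by auto
  obtain U where U: "openin X U" "U \<inter> CB_derivative X \<delta> = {x}"
    by (rule CB_level_isolated[OF \<delta>(2)])
  \<comment> \<open>every point of \<open>U\<close> other than \<open>x\<close> lies on a level below \<open>\<delta>\<close>\<close>
  have "U \<subseteq> \<Union> (CB_level X ` {\<delta>. \<delta> \<le> \<gamma>})"
  proof
    fix u assume "u \<in> U"
    show "u \<in> \<Union> (CB_level X ` {\<delta>. \<delta> \<le> \<gamma>})"
    proof (cases "u \<in> CB_derivative X \<delta>")
      case True
      then have "u = x" using U(2) \<open>u \<in> U\<close> by blast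
      then show ?thesis using \<delta> by blast
    next
      case False
      then obtain \<delta>' where "\<delta>' < \<delta>" "u \<in> CB_level X \<delta>'"
        using openin_subset[OF U(1)] \<open>u \<in> U\<close> unfolding CB_derivative_def by blast
      moreover have "\<delta>' \<le> \<gamma>" using \<open>\<delta>' < \<delta>\<close> \<delta>(1) by simp
      ultimately show ?thesis by blast
    qed
  qed
  then show "\<exists>T. openin X T \<and> x \<in> T \<and> T \<subseteq> \<Union> (CB_level X ` {\<delta>. \<delta> \<le> \<gamma>})"
    using U by blast
qed

lemma scattered_CB_level_meets_open:
  assumes "scattered_space X" and "openin X W" and "x \<in> W" and "x \<in> CB_derivative X \<beta>"
  shows "W \<inter> CB_level X \<beta> \<noteq> {}"
proof -
  have "W \<inter> CB_derivative X \<beta> \<subseteq> topspace X" "W \<inter> CB_derivative X \<beta> \<noteq> {}"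
    using assms(3,4) unfolding CB_derivative_def by auto
  then obtain z U where z: "z \<in> W \<inter> CB_derivative X \<beta>" "openin X U"
      "U \<inter> (W \<inter> CB_derivative X \<beta>) = {z}"
    using assms(1) unfolding scattered_space_def isolated_points_of_def by blast
  then have "openin X (U \<inter> W)" "(U \<inter> W) \<inter> CB_derivative X \<beta> = {z}"
    using assms(2) by blast+
  then have "z \<in> CB_level X \<beta>"
    using z(1) unfolding CB_level_eq_isolated_points isolated_points_of_def by blast
  then show ?thesis using z(1) by blast
qed

text \<open>A compact set missing \<open>X\<^sup>(\<^sup>\<alpha>\<^sup>)\<close> is covered by the open sets
  \<open>\<Union>\<^sub>\<delta>\<^sub>\<le>\<^sub>\<gamma> CB_level X \<delta>\<close>, \<open>\<gamma> < \<alpha>\<close>, hence by one of them.\<close>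

lemma compactin_CB_levels_bounded:
  assumes K: "compactin X K" and K_disj: "K \<inter> CB_derivative X \<alpha> = {}" and "\<gamma>\<^sub>0 < \<alpha>"
  shows "\<exists>\<gamma><\<alpha>. \<forall>\<delta>. \<gamma> < \<delta> \<longrightarrow> K \<inter> CB_level X \<delta> = {}"
proof -
  let ?O = "\<lambda>\<gamma>. \<Union> (CB_level X ` {\<delta>. \<delta> \<le> \<gamma>})"
  have "K \<subseteq> \<Union> (?O ` {\<gamma>. \<gamma> < \<alpha>})"
    using K_disj compactin_subset_topspace[OF K] unfolding CB_derivative_def by blast
  moreover have "\<forall>U\<in>?O ` {\<gamma>. \<gamma> < \<alpha>}. openin X U"
    using openin_Union_CB_levels by blast
  ultimately have "\<exists>F. finite F \<and> F \<subseteq> ?O ` {\<gamma>. \<gamma> < \<alpha>} \<and> K \<subseteq> \<Union> F"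
    using K unfolding compactin_def by blast
  then obtain F where F: "finite F" "F \<subseteq> ?O ` {\<gamma>. \<gamma> < \<alpha>}" "K \<subseteq> \<Union> F"
    by blast
  obtain G where G: "G \<subseteq> {\<gamma>. \<gamma> < \<alpha>}" "finite G" "F = ?O ` G"
    using finite_subset_image[OF F(1,2)] by blast
  define \<gamma> where "\<gamma> = (if G = {} then \<gamma>\<^sub>0 else Max G)"
  have "\<gamma> < \<alpha>" using G \<open>\<gamma>\<^sub>0 < \<alpha>\<close> unfolding \<gamma>_def by auto
  moreover have "K \<subseteq> ?O \<gamma>"
  proof
    fix x assume "x \<in> K"
    then obtain \<gamma>' \<delta> where "\<gamma>' \<in> G" "\<delta> \<le> \<gamma>'" "x \<in> CB_level X \<delta>"
      using F(3) G(3) by auto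
    moreover have "\<gamma>' \<le> \<gamma>" using G(2) \<open>\<gamma>' \<in> G\<close> unfolding \<gamma>_def by auto
    ultimately show "x \<in> ?O \<gamma>" using order.trans[of \<delta> \<gamma>' \<gamma>] by blast
  qed
  moreover have "K \<inter> CB_level X \<delta> = {}" if "\<gamma> < \<delta>" for \<delta>
  proof -
    have "CB_level X \<delta>' \<inter> CB_level X \<delta> = {}" if "\<delta>' \<le> \<gamma>" for \<delta>'
      by (rule CB_level_disjoint) (use \<open>\<gamma> < \<delta>\<close> that in auto)
    then show ?thesis using \<open>K \<subseteq> ?O \<gamma>\<close> by blast
  qed
  ultimately show ?thesis by blast
qed

lemma compactin_eventually_misses_CB_levels:
  fixes \<alpha> :: "'o::wellorder"
  assumes g: "cofinal_seq g (cof \<alpha>) \<alpha>" and inf: "infinite {\<xi>. \<xi> < cof \<alpha>}"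
    and C: "compactin X C" "C \<inter> CB_derivative X \<alpha> = {}"
  shows "\<exists>\<xi><cof \<alpha>. \<forall>\<xi>'. \<xi> \<le> \<xi>' \<and> \<xi>' < cof \<alpha> \<longrightarrow> C \<inter> CB_level X (g \<xi>') = {}"
proof -
  obtain \<xi>\<^sub>0 where "\<xi>\<^sub>0 < cof \<alpha>"
    using infinite_imp_nonempty[OF inf] by blast
  then have "g \<xi>\<^sub>0 < \<alpha>" using g unfolding cofinal_seq_def by blast
  then obtain \<gamma> where "\<gamma> < \<alpha>" and \<gamma>: "\<forall>\<delta>. \<gamma> < \<delta> \<longrightarrow> C \<inter> CB_level X \<delta> = {}"
    using compactin_CB_levels_bounded[OF C] by blast
  then obtain \<xi> where \<xi>: "\<xi> < cof \<alpha>" "\<gamma> < g \<xi>"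
    using cofinal_seq_exceeds[OF g inf] by blast
  have "C \<inter> CB_level X (g \<xi>') = {}" if "\<xi> \<le> \<xi>'" "\<xi>' < cof \<alpha>" for \<xi>'
    using \<gamma> less_le_trans[OF \<xi>(2) cofinal_seq_mono[OF g that]] by blast
  then show ?thesis using \<xi>(1) by blast
qed

lemma LCS_CB_level_compact_nhd:
  assumes X: "LCS_space X" and y: "y \<in> CB_level X \<alpha>"
  shows "\<exists>W K. openin X W \<and> compactin X K \<and> y \<in> W \<and> W \<subseteq> K \<and>
    K \<inter> CB_derivative X \<alpha> = {y}"
proof -
  obtain V where V: "openin X V" "V \<inter> CB_derivative X \<alpha> = {y}"
    by (rule CB_level_isolated[OF y])
  have "Hausdorff_space X" "locally_compact_space X"
    using X unfolding LCS_space_def by blast+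
  then have "neighbourhood_base_of (compactin X) X"
    using locally_compact_space_neighbourhood_base by blast
  moreover have "y \<in> V" using V(2) by blast
  ultimately have "\<exists>W K. openin X W \<and> compactin X K \<and> y \<in> W \<and> W \<subseteq> K \<and> K \<subseteq> V"
    using V(1) unfolding neighbourhood_base_of by blast
  then obtain W K where WK: "openin X W" "compactin X K" "y \<in> W" "W \<subseteq> K" "K \<subseteq> V"
    by blast
  moreover have "y \<in> CB_derivative X \<alpha>"
    using subsetD[OF CB_level_subset_derivative y] .
  ultimately have "K \<inter> CB_derivative X \<alpha> = {y}"
    using V(2) by blast
  then show ?thesis using WK(1-4) by blast
qed

lemma LCS_CB_level_compact_nhds:
  assumes "LCS_space X"
  obtains W K where "\<forall>y\<in>CB_level X \<alpha>. openin X (W y) \<and> compactin X (K y) \<and>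
    y \<in> W y \<and> W y \<subseteq> K y \<and> K y \<inter> CB_derivative X \<alpha> = {y}"
proof -
  have "\<forall>y\<in>CB_level X \<alpha>. \<exists>W K. openin X W \<and> compactin X K \<and> y \<in> W \<and> W \<subseteq> K \<and>
      K \<inter> CB_derivative X \<alpha> = {y}"
    using LCS_CB_level_compact_nhd[OF assms] by blast
  then show thesis
    using that by (metis (no_types))
qed

lemma compactins_disjoint_at_CB_level:
  fixes \<alpha> \<delta> :: "'o::wellorder"
  assumes "Hausdorff_space X" and g: "cofinal_seq g (cof \<alpha>) \<alpha>"
    and inf: "infinite {\<xi>. \<xi> < cof \<alpha>}" and \<delta>: "\<delta> < cof \<alpha>"
    and C: "\<And>\<zeta>. \<zeta> < \<delta> \<Longrightarrow> compactin X (C \<zeta>)"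
    and C_disj: "\<And>\<zeta> \<zeta>'. \<zeta> < \<delta> \<Longrightarrow> \<zeta>' < \<delta> \<Longrightarrow> \<zeta> \<noteq> \<zeta>' \<Longrightarrow> C \<zeta> \<inter> C \<zeta>' \<inter> CB_derivative X \<alpha> = {}"
  obtains s where "s < cof \<alpha>"
    and "\<And>\<zeta> \<zeta>'. \<zeta> < \<delta> \<Longrightarrow> \<zeta>' < \<delta> \<Longrightarrow> \<zeta> \<noteq> \<zeta>' \<Longrightarrow> C \<zeta> \<inter> C \<zeta>' \<inter> CB_level X (g s) = {}"
proof -
  define avoids where
    "avoids \<zeta> \<zeta>' \<xi> \<longleftrightarrow> (\<zeta> \<noteq> \<zeta>' \<longrightarrow> C \<zeta> \<inter> C \<zeta>' \<inter> CB_level X (g \<xi>) = {})" for \<zeta> \<zeta>' \<xi>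
  have pair: "\<exists>\<xi><cof \<alpha>. \<forall>\<xi>'. \<xi> \<le> \<xi>' \<and> \<xi>' < cof \<alpha> \<longrightarrow> avoids \<zeta> \<zeta>' \<xi>'"
    if "\<zeta> < \<delta>" "\<zeta>' < \<delta>" for \<zeta> \<zeta>'
  proof (cases "\<zeta> = \<zeta>'")
    case True
    then show ?thesis using \<delta> unfolding avoids_def by blast
  next
    case False
    have "compactin X (C \<zeta> \<inter> C \<zeta>')"
      using compactin_Int[OF assms(1) C C] that .
    from compactin_eventually_misses_CB_levels[OF g inf this C_disj[OF that False]]
    show ?thesis unfolding avoids_def by blast
  qed
  have "\<exists>\<xi><cof \<alpha>. \<forall>\<xi>'. \<xi> \<le> \<xi>' \<and> \<xi>' < cof \<alpha> \<longrightarrow> (\<forall>\<zeta>'<\<delta>. avoids \<zeta> \<zeta>' \<xi>')"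
    if "\<zeta> < \<delta>" for \<zeta>
    by (rule eventually_below_cof_Ball[OF g \<delta>]) (use pair that in blast)
  then have "\<exists>\<xi><cof \<alpha>. \<forall>\<xi>'. \<xi> \<le> \<xi>' \<and> \<xi>' < cof \<alpha> \<longrightarrow> (\<forall>\<zeta><\<delta>. \<forall>\<zeta>'<\<delta>. avoids \<zeta> \<zeta>' \<xi>')"
    by (intro eventually_below_cof_Ball[OF g \<delta>]) blast
  then obtain s where "s < cof \<alpha>" "\<forall>\<zeta><\<delta>. \<forall>\<zeta>'<\<delta>. avoids \<zeta> \<zeta>' s"
    by blast
  then show thesis
    using that unfolding avoids_def by blast
qed

lemma CB_level_injection_down:
  fixes \<alpha> \<delta> :: "'o::wellorder"
  assumes X: "LCS_space X" and g: "cofinal_seq g (cof \<alpha>) \<alpha>"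
    and inf: "infinite {\<xi>. \<xi> < cof \<alpha>}" and \<delta>: "\<delta> < cof \<alpha>"
    and e: "inj_on e {\<zeta>. \<zeta> < \<delta>}" "e ` {\<zeta>. \<zeta> < \<delta>} \<subseteq> CB_level X \<alpha>"
  shows "\<exists>s<cof \<alpha>. |{\<zeta>. \<zeta> < \<delta>}| \<le>o |CB_level X (g s)|"
proof -
  obtain W K where WK: "\<forall>y\<in>CB_level X \<alpha>. openin X (W y) \<and> compactin X (K y) \<and>
      y \<in> W y \<and> W y \<subseteq> K y \<and> K y \<inter> CB_derivative X \<alpha> = {y}"
    by (rule LCS_CB_level_compact_nhds[OF X])
  have W_open: "openin X (W (e \<zeta>))" and e_in_W: "e \<zeta> \<in> W (e \<zeta>)"
    and W_sub_K: "W (e \<zeta>) \<subseteq> K (e \<zeta>)" and K_compact: "compactin X (K (e \<zeta>))"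
    and K_centre: "K (e \<zeta>) \<inter> CB_derivative X \<alpha> = {e \<zeta>}"
    and e_derivative: "e \<zeta> \<in> CB_derivative X \<alpha>"
    if "\<zeta> < \<delta>" for \<zeta>
  proof -
    have "e \<zeta> \<in> CB_level X \<alpha>" using e(2) that by blast
    then show "openin X (W (e \<zeta>))" "e \<zeta> \<in> W (e \<zeta>)" "W (e \<zeta>) \<subseteq> K (e \<zeta>)"
      "compactin X (K (e \<zeta>))" "K (e \<zeta>) \<inter> CB_derivative X \<alpha> = {e \<zeta>}" "e \<zeta> \<in> CB_derivative X \<alpha>"
      using WK CB_level_subset_derivative by blast+
  qed
  have "Hausdorff_space X" and "scattered_space X"
    using X unfolding LCS_space_def by blast+
  have K_disj: "K (e \<zeta>) \<inter> K (e \<zeta>') \<inter> CB_derivative X \<alpha> = {}"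
    if "\<zeta> < \<delta>" "\<zeta>' < \<delta>" "\<zeta> \<noteq> \<zeta>'" for \<zeta> \<zeta>'
  proof -
    have "e \<zeta> \<noteq> e \<zeta>'" using e(1) that unfolding inj_on_def by blast
    moreover have "K (e \<zeta>) \<inter> K (e \<zeta>') \<inter> CB_derivative X \<alpha> \<subseteq> {e \<zeta>} \<inter> {e \<zeta>'}"
      using K_centre[OF that(1)] K_centre[OF that(2)] by blast
    ultimately show ?thesis by blast
  qed
  obtain s where s: "s < cof \<alpha>"
    and disj: "\<And>\<zeta> \<zeta>'. \<zeta> < \<delta> \<Longrightarrow> \<zeta>' < \<delta> \<Longrightarrow> \<zeta> \<noteq> \<zeta>' \<Longrightarrow>
      K (e \<zeta>) \<inter> K (e \<zeta>') \<inter> CB_level X (g s) = {}"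
    using compactins_disjoint_at_CB_level[where C="\<lambda>\<zeta>. K (e \<zeta>)",
        OF \<open>Hausdorff_space X\<close> g inf \<delta> K_compact K_disj] by blast
  have "g s < \<alpha>" using g s unfolding cofinal_seq_def by blast
  have meets: "W (e \<zeta>) \<inter> CB_level X (g s) \<noteq> {}" if "\<zeta> < \<delta>" for \<zeta>
  proof -
    have "e \<zeta> \<in> CB_derivative X (g s)"
      using subsetD[OF CB_derivative_antimono[OF less_imp_le[OF \<open>g s < \<alpha>\<close>]] e_derivative[OF that]] .
    then show ?thesis
      using scattered_CB_level_meets_open[OF \<open>scattered_space X\<close> W_open e_in_W] that by blast
  qed
  have W_disj: "W (e \<zeta>) \<inter> W (e \<zeta>') \<inter> CB_level X (g s) = {}"
    if "\<zeta> < \<delta>" "\<zeta>' < \<delta>" "\<zeta> \<noteq> \<zeta>'" for \<zeta> \<zeta>'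
    using disj[OF that] W_sub_K[OF that(1)] W_sub_K[OF that(2)] by blast
  have "|{\<zeta>. \<zeta> < \<delta>}| \<le>o |CB_level X (g s)|"
    by (rule card_of_ordLeq_disjoint_traces[where A="\<lambda>\<zeta>. W (e \<zeta>)"]) (simp_all add: meets W_disj)
  with s show ?thesis by blast
qed

theorem proposition1p1:
  fixes \<kappa> :: "'k rel" and \<eta> \<alpha> :: "'o::wellorder" and X :: "'a topology"
  assumes kappa_card: "Card_order \<kappa>" and kappa_inf: "Cinfinite \<kappa>"
    and kappa_reg: "regularCard \<kappa>"
    and eta: "(cardSuc (cardSuc \<kappa>), ord_seg \<eta>) \<in> ordLess"
    and X: "LCS_space X" and ht: "reduced_height_is X \<eta>"
    and alpha: "\<alpha> < \<eta>"
    and cf: "(cardSuc \<kappa>, ord_seg (cof \<alpha>)) \<in> ordLess"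
    and seq: "\<exists>g. cofinal_seq g (cof \<alpha>) \<alpha> \<and>
                 (\<forall>\<xi>. \<xi> < cof \<alpha> \<longrightarrow> (card_of (CB_level X (g \<xi>)), \<kappa>) \<in> ordLeq)"
  shows "(card_of (CB_level X \<alpha>), \<kappa>) \<in> ordLeq"
proof (rule ccontr)
  assume "(card_of (CB_level X \<alpha>), \<kappa>) \<notin> ordLeq"
  then have "\<kappa> <o |CB_level X \<alpha>|"
    using not_ordLeq_iff_ordLess[OF card_order_on_well_order_on[OF kappa_card] card_of_Well_order]
    by blast
  then have big: "cardSuc \<kappa> \<le>o |CB_level X \<alpha>|"
    using cardSuc_ordLess_ordLeq[OF kappa_card card_of_Card_order] by blast
  obtain g where g: "cofinal_seq g (cof \<alpha>) \<alpha>" and small: "\<forall>\<xi><cof \<alpha>. |CB_level X (g \<xi>)| \<le>o \<kappa>"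
    using seq by blast
  obtain d where d: "d < cof \<alpha>" "(cardSuc \<kappa>, ord_seg d) \<in> ordIso"
    using ordLess_ord_seg_obtain[OF card_order_on_well_order_on[OF cardSuc_Card_order] cf]
      kappa_card by blast
  have card_d: "(card_of {\<xi>. \<xi> < d}, cardSuc \<kappa>) \<in> ordIso"
    by (rule card_of_ord_seg_ordIso[OF cardSuc_Card_order[OF kappa_card] d(2)])
  have inf: "infinite {\<xi>. \<xi> < cof \<alpha>}"
    using infinite_ord_seg[OF Cinfinite_cardSuc[OF kappa_inf] ordLess_imp_ordLeq[OF cf]] .
  obtain e where "inj_on e {\<xi>. \<xi> < d}" "e ` {\<xi>. \<xi> < d} \<subseteq> CB_level X \<alpha>"
    using card_of_ordLeq[THEN iffD2, OF ordIso_ordLeq_trans[OF card_d big]] by blast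
  then obtain s where "s < cof \<alpha>" "|{\<xi>. \<xi> < d}| \<le>o |CB_level X (g s)|"
    using CB_level_injection_down[OF X g inf d(1)] by blast
  then have "cardSuc \<kappa> \<le>o \<kappa>"
    using small ordIso_ordLeq_trans[OF ordIso_symmetric[OF card_d]] ordLeq_transitive by blast
  then show False
    using cardSuc_greater[OF kappa_card] not_ordLess_ordLeq by blast
qed

end
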